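(* Let $T^\ast$ be the $n\times3$ minimal matrix representation of an acute $0/1$-triangle $\mathcal{T}^\ast$ in $[0,1]^n$ (so $\mathcal{T}^\ast$ is the minimal representative of its $\mathcal{B}_n$-orbit), and let $\mathcal{A}^n(\mathcal{T}^\ast)=\{t_1,\dots,t_p\}$. Then every minimal matrix representation of an acute $0/1$-tetrahedron having $\mathcal{T}^\ast$ as its minimal triangular facet (i.e. whose three leftmost columns form $T^\ast$) is among the matrices $[T^\ast\,|\,t_1],\dots,[T^\ast\,|\,t_p]$.
   Context: $\mathcal{B}_n$ is the group of symmetries of $[0,1]^n$, acting on $\{0,1\}^n$ by permuting coordinates and complementing a subset of coordinates. Column number of $x\in\{0,1\}^n$: $v_n^\top x$ with $v_n^\top=(2^0,\dots,2^{n-1})$. For an $n\times k$ $0/1$-matrix $P$ with distinct columns, $\nu(P)$ is the increasingly sorted vector of its column numbers. $P$ is a minimal matrix representation if its column numbers are strictly increasing left to right and $\nu(P)\preceq\nu(Q)$ lexicographically for every $Q$ obtained from $P$ by complementing some rows and then permuting rows. A set of points of $\{0,1\}^n$ is the vertex set of an acute $0/1$-simplex if it is affinely independent and all dihedral angles of its convex hull are acute (for a triangle: all angles $<\pi/2$); equivalently, with one vertex $a_0$ and $P=[a_1-a_0,\dots]$, $G=P^\top P$, $G^{-1}$ has negative off-diagonal entries and positive row sums. $\mathcal{A}^n(S)$ is the set of $v\in\{0,1\}^n$ such that $S\cup\{v\}$ is the vertex set of an acute $0/1$-simplex with one more vertex. *)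

theory Defs
  imports Complex_Main "HOL-Combinatorics.Permutations"
begin

text \<open>Points of the cube {0,1}^n are encoded as functions nat => bool that are False
  outside {..<n}; an n x k 0/1-matrix is the list of its k columns.\<close>

definition cube :: "nat \<Rightarrow> (nat \<Rightarrow> bool) set" where
  "cube n = {x. \<forall>i\<ge>n. \<not> x i}"

definition colnum :: "nat \<Rightarrow> (nat \<Rightarrow> bool) \<Rightarrow> nat" where
  "colnum n x = (\<Sum>i<n. if x i then 2 ^ i else 0)"

definition nu :: "nat \<Rightarrow> (nat \<Rightarrow> bool) list \<Rightarrow> nat list" where
  "nu n P = sort (map (colnum n) P)"

definition lex_le :: "nat list \<Rightarrow> nat list \<Rightarrow> bool" where
  "lex_le xs ys \<longleftrightarrow> xs = ys \<or> (xs, ys) \<in> lexord {(a, b). a < b}"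

definition row_op :: "nat \<Rightarrow> nat set \<Rightarrow> (nat \<Rightarrow> nat) \<Rightarrow> (nat \<Rightarrow> bool) \<Rightarrow> (nat \<Rightarrow> bool)" where
  "row_op n C \<sigma> x = (\<lambda>i. if i < n then (x (\<sigma> i) \<noteq> (\<sigma> i \<in> C)) else False)"

definition is_matrix :: "nat \<Rightarrow> nat \<Rightarrow> (nat \<Rightarrow> bool) list \<Rightarrow> bool" where
  "is_matrix n k P \<longleftrightarrow> length P = k \<and> set P \<subseteq> cube n \<and> distinct P"

definition minimal_matrix_rep :: "nat \<Rightarrow> nat \<Rightarrow> (nat \<Rightarrow> bool) list \<Rightarrow> bool" where
  "minimal_matrix_rep n k P \<longleftrightarrow>
     is_matrix n k P \<and>
     sorted_wrt (<) (map (colnum n) P) \<and>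
     (\<forall>C \<sigma>. C \<subseteq> {..<n} \<longrightarrow> \<sigma> permutes {..<n} \<longrightarrow>
        lex_le (nu n P) (nu n (map (row_op n C \<sigma>) P)))"

text \<open>Acute 0/1-simplex: with vertex a0 and the remaining vertices listed as a1..ak,
  P = [a1-a0,...,ak-a0], G = P^T P; G is invertible (affine independence) and
  G^{-1} has negative off-diagonal entries and positive row sums.\<close>
definition gram :: "nat \<Rightarrow> (nat \<Rightarrow> bool) \<Rightarrow> (nat \<Rightarrow> bool) list \<Rightarrow> nat \<Rightarrow> nat \<Rightarrow> real" where
  "gram n a0 as i j =
     (\<Sum>l<n. (of_bool ((as ! i) l) - of_bool (a0 l)) * (of_bool ((as ! j) l) - of_bool (a0 l)))"

definition acute_simplex :: "nat \<Rightarrow> (nat \<Rightarrow> bool) set \<Rightarrow> bool" where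
  "acute_simplex n S \<longleftrightarrow> finite S \<and> S \<subseteq> cube n \<and>
     (\<exists>a0 \<in> S. \<exists>as. distinct as \<and> set as = S - {a0} \<and>
        (let k = length as; G = gram n a0 as in
         \<exists>H :: nat \<Rightarrow> nat \<Rightarrow> real.
           (\<forall>i<k. \<forall>j<k. (\<Sum>l<k. G i l * H l j) = (if i = j then 1 else 0)) \<and>
           (\<forall>i<k. \<forall>j<k. i \<noteq> j \<longrightarrow> H i j < 0) \<and>
           (\<forall>i<k. (\<Sum>j<k. H i j) > 0)))"

definition acute_ext :: "nat \<Rightarrow> (nat \<Rightarrow> bool) set \<Rightarrow> (nat \<Rightarrow> bool) set" where
  "acute_ext n S = {v \<in> cube n. v \<notin> S \<and> acute_simplex n (insert v S)}"

end

theory Submission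
  imports Defs
begin

text \<open>A 4-column matrix whose first three columns form T is T extended by its fourth column t,
  and acuteness of the tetrahedron, with t distinct from the columns of T, is exactly membership
  of t in the acute extension set of T.\<close>

lemma snoc_mem_acute_ext:
  assumes "set (T @ [t]) \<subseteq> cube n" and "distinct (T @ [t])"
    and "acute_simplex n (set (T @ [t]))"
  shows "t \<in> acute_ext n (set T)"
  using assms by (simp add: acute_ext_def)

lemma eq_take_snoc_nth:
  assumes "length M = Suc k" and "take k M = T"
  shows "M = T @ [M ! k]"
  using take_Suc_conv_app_nth[of k M] assms by simp

theorem proposition5p14:
  fixes n :: nat and T M :: "(nat \<Rightarrow> bool) list"
  assumes "minimal_matrix_rep n 3 T" and "acute_simplex n (set T)"
    and "minimal_matrix_rep n 4 M" and "acute_simplex n (set M)"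
    and "take 3 M = T"
  shows "\<exists>t \<in> acute_ext n (set T). M = T @ [t]"
proof -
  have M: "length M = 4" "set M \<subseteq> cube n" "distinct M"
    using assms(3) by (auto simp: minimal_matrix_rep_def is_matrix_def)
  have M_snoc: "M = T @ [M ! 3]"
    using eq_take_snoc_nth[of M 3 T] M(1) assms(5) by simp
  have "M ! 3 \<in> acute_ext n (set T)"
    using snoc_mem_acute_ext[of T "M ! 3" n] M(2,3) assms(4) M_snoc by simp
  with M_snoc show ?thesis by blast
qed

end
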